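(* In the setting described in the context, let $\mathcal{S}_{\Lambda,u_{1,\infty},N}=\{(V,u):V\in\Lambda,\ u\in\mathcal{S}_{V,u_\infty(V)},\ u(N)\in B_{\mathbb{R}^d}(u_{1,\infty},\varepsilon_1)\}$. Then the map $\Phi^{-1}(\mathcal{W})\to\mathcal{S}_{\Lambda,u_{1,\infty},N}$, $(u_0,u_N,V)\mapsto\bigl(V,\ r\mapsto \pi_u S_V((0,r),(u_0,0))\bigr)$, where $\pi_u$ denotes the projection $(u,v)\mapsto u$, is well defined and one-to-one.
   Context: Let $n\ge2$, $d\ge1$, $k\ge1$, $R>0$, $\mathcal{V}_{\mathrm{quad}}(R)=\{V\in\mathcal{C}^{k+1}(\mathbb{R}^d,\mathbb{R}):V(u)=|u|^2/2\text{ for }|u|\ge R\}$ (topology: neighbourhoods $V+\mathcal{O}$, $\mathcal{O}$ open in $\mathcal{C}^{k+1}_b$ with the norm $\max_{|\alpha|\le k+1}\|\partial^\alpha\cdot\|_{L^\infty}$). For $V\in\mathcal{V}_{\mathrm{quad}}(R)$, $S_V((r_1,r),(u_1,v_1))$ denotes the value at $r$ of the (globally defined) solution of $\dot u=v$, $\dot v=-\frac{n-1}{r}v+\nabla V(u)$ equal to $(u_1,v_1)$ at $r_1>0$, and $S_V((0,r),(u_0,0))=(u(r),\dot u(r))$ where $u$ is the unique solution of $\ddot u=-\frac{n-1}{r}\dot u+\nabla V(u)$ with $(u(r),\dot u(r))\to(u_0,0)$ as $r\to0^+$. For $p\in\mathbb{R}^d$, $\mathcal{S}_{V,p}$ is the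 set of $u:[0,+\infty)\to\mathbb{R}^d$ solving this equation on $(0,+\infty)$ with $\dot u(r)\to0$ as $r\to0^+$ and $u(r)\to p$ as $r\to+\infty$. Setting: $V_1\in\mathcal{V}_{\mathrm{quad}}(R)$, $u_{1,\infty}$ a nondegenerate minimum point of $V_1$; $\Lambda$ a neighbourhood of $V_1$ in $\mathcal{V}_{\mathrm{quad}}(R)$, $\varepsilon_1,c_1>0$, and $u_\infty:\Lambda\to\mathbb{R}^d$ a $\mathcal{C}^k$ map with $u_\infty(V_1)=u_{1,\infty}$, $u_\infty(V)$ a local minimum point of $V$, such that for every $V\in\Lambda$ there is a $\mathcal{C}^k$ map $w_V:\bar B_{\mathbb{R}^d}(u_{1,\infty},\varepsilon_1)\times[0,c_1]\to\mathbb{R}^d$ ($\mathcal{C}^k$ jointly in $(u,c,V)$) with the property: for $(u_0,v_0,c_0)\in\bar B_{\mathbb{R}^d}(u_{1,\infty},\varepsilon_1)\times\mathbb{R}^d\times(0,c_1]$, $v_0=w_V(u_0,c_0)$ iff the solution of $u_r=v$, $v_r=-(n-1)cv+\nabla V(u)$, $c_r=-c^2$ with initial condition $(u_0,v_0,c_0)$ at time $1/c_0$ is defined up to $+\infty$, stays in $\bar B_{\mathbb{R}^d}(u_{1,\infty},\varepsilon_1)\times\mathbb{R}^d\times[0,c_1]$ and tends to $(u_\infty(V),0,0)$. Let $N$ be an integer with $N\ge 1/c_1$, $\mathcal{M}=\mathbb{R}^d\times B_{\mathbb{R}^d}(u_{1,\infty},\varepsilon_1)$, $\mathcal{N}=(\mathbb{R}^{2d})^2$,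 $\mathcal{W}=\{(A,B)\in\mathcal{N}:A=B\}$, $\Phi^u(u_0,V)=S_V((0,N),(u_0,0))$, $\Phi^{cs}(u_N,V)=(u_N,w_V(u_N,1/N))$, and $\Phi:\mathcal{M}\times\Lambda\to\mathcal{N}$, $\Phi(u_0,u_N,V)=(\Phi^u(u_0,V),\Phi^{cs}(u_N,V))$. *)

theory Defs
  imports "HOL-Analysis.Analysis"
begin

fun Ck_on :: "nat \<Rightarrow> 'a::euclidean_space set \<Rightarrow> ('a \<Rightarrow> 'b::real_normed_vector) \<Rightarrow> bool" where
  "Ck_on 0 S f = continuous_on S f"
| "Ck_on (Suc m) S f = (f differentiable_on S \<and>
      (\<forall>v. Ck_on m S (\<lambda>x. frechet_derivative f (at x) v)))"

definition grad :: "('a::euclidean_space \<Rightarrow> real) \<Rightarrow> 'a \<Rightarrow> 'a" where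
  "grad V x = (\<Sum>b\<in>Basis. frechet_derivative V (at x) b *\<^sub>R b)"

text \<open>Iterated partial derivative along a list of basis directions (multi-index).\<close>
fun pderiv_multi :: "'a::euclidean_space list \<Rightarrow> ('a \<Rightarrow> real) \<Rightarrow> 'a \<Rightarrow> real" where
  "pderiv_multi [] f = f"
| "pderiv_multi (b # bs) f = (\<lambda>x. frechet_derivative (pderiv_multi bs f) (at x) b)"

definition Vquad :: "nat \<Rightarrow> real \<Rightarrow> ('a::euclidean_space \<Rightarrow> real) set" where
  "Vquad k R = {V. Ck_on (Suc k) UNIV V \<and> (\<forall>u. norm u \<ge> R \<longrightarrow> V u = (norm u)\<^sup>2 / 2)}"

text \<open>Lambda is a neighbourhood of V1 in V_quad(R) for the C^(k+1)_b topology.\<close>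
definition is_nbhd_Vquad :: "nat \<Rightarrow> real \<Rightarrow> ('a::euclidean_space \<Rightarrow> real) set \<Rightarrow> ('a \<Rightarrow> real) \<Rightarrow> bool" where
  "is_nbhd_Vquad k R \<Lambda> V1 \<longleftrightarrow> \<Lambda> \<subseteq> Vquad k R \<and> V1 \<in> \<Lambda> \<and>
     (\<exists>\<delta>>0. \<forall>V\<in>Vquad k R.
        (\<forall>bs. set bs \<subseteq> Basis \<and> length bs \<le> Suc k \<longrightarrow>
              (\<forall>x. \<bar>pderiv_multi bs (\<lambda>y. V y - V1 y) x\<bar> < \<delta>)) \<longrightarrow> V \<in> \<Lambda>)"

definition local_min_point :: "('a::euclidean_space \<Rightarrow> real) \<Rightarrow> 'a \<Rightarrow> bool" where
  "local_min_point V p \<longleftrightarrow> (\<exists>e>0. \<forall>x\<in>ball p e. V p \<le> V x)"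

definition nondeg_min_point :: "('a::euclidean_space \<Rightarrow> real) \<Rightarrow> 'a \<Rightarrow> bool" where
  "nondeg_min_point V p \<longleftrightarrow> local_min_point V p \<and>
     (\<forall>h. h \<noteq> 0 \<longrightarrow> frechet_derivative (\<lambda>x. frechet_derivative V (at x) h) (at p) h > 0)"

definition centered_sol :: "nat \<Rightarrow> ('a::euclidean_space \<Rightarrow> real) \<Rightarrow> 'a \<Rightarrow> (real \<Rightarrow> 'a \<times> 'a) \<Rightarrow> bool" where
  "centered_sol n V u0 y \<longleftrightarrow>
     (\<forall>r>0. ((\<lambda>s. fst (y s)) has_vector_derivative snd (y r)) (at r) \<and>
            ((\<lambda>s. snd (y s)) has_vector_derivative
               (- ((real n - 1) / r) *\<^sub>R snd (y r) + grad V (fst (y r)))) (at r)) \<and>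
     (y \<longlongrightarrow> (u0, 0)) (at_right 0) \<and>
     (\<forall>r\<le>0. y r = (u0, 0))"

text \<open>S_V((0,r),(u0,0)) (with value (u0,0) at r = 0).\<close>
definition S0 :: "nat \<Rightarrow> ('a::euclidean_space \<Rightarrow> real) \<Rightarrow> 'a \<Rightarrow> real \<Rightarrow> 'a \<times> 'a" where
  "S0 n V u0 r = (THE y. centered_sol n V u0 y) r"

definition radial_set :: "nat \<Rightarrow> ('a::euclidean_space \<Rightarrow> real) \<Rightarrow> 'a \<Rightarrow> (real \<Rightarrow> 'a) set" where
  "radial_set n V p = {u. \<exists>u'. continuous_on {0..} u \<and>
     (\<forall>r>0. (u has_vector_derivative u' r) (at r) \<and>
            (u' has_vector_derivative (- ((real n - 1) / r) *\<^sub>R u' r + grad V (u r))) (at r)) \<and>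
     (u' \<longlongrightarrow> 0) (at_right 0) \<and> (u \<longlongrightarrow> p) at_top}"

definition auto_field :: "nat \<Rightarrow> ('a::euclidean_space \<Rightarrow> real) \<Rightarrow> 'a \<times> 'a \<times> real \<Rightarrow> 'a \<times> 'a \<times> real" where
  "auto_field n V z = (case z of (u, v, c) \<Rightarrow>
     (v, - ((real n - 1) * c) *\<^sub>R v + grad V u, - (c\<^sup>2)))"

definition stable_data ::
  "nat \<Rightarrow> ('a::euclidean_space \<Rightarrow> real) \<Rightarrow> 'a \<Rightarrow> real \<Rightarrow> real \<Rightarrow> 'a \<Rightarrow> 'a \<Rightarrow> 'a \<Rightarrow> real \<Rightarrow> bool" where
  "stable_data n V u1 \<epsilon>1 c1 p u0 v0 c0 \<longleftrightarrow>
     (\<exists>z :: real \<Rightarrow> 'a \<times> 'a \<times> real.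
        z (1 / c0) = (u0, v0, c0) \<and>
        (\<forall>r\<ge>1 / c0. (z has_vector_derivative auto_field n V (z r)) (at r within {1 / c0..}) \<and>
                     z r \<in> cball u1 \<epsilon>1 \<times> UNIV \<times> {0..c1}) \<and>
        (z \<longlongrightarrow> (p, 0, 0)) at_top)"

end

(* Since V is quadratic outside a ball, grad V is globally Lipschitz.  The centred solution
   S0 is then obtained from the integral equation
     u t = u0 + \<integral>\<^sub>0\<^sup>t s\<^sup>1\<^sup>-\<^sup>n \<integral>\<^sub>0\<^sup>s \<sigma>\<^sup>n\<^sup>-\<^sup>1 grad V (u \<sigma>) d\<sigma> ds
   by Banach's fixed point theorem in an exponentially weighted sup norm.  It is unique: for
   two centred solutions, the maximal distance M of their positions on a short interval
   [0, \<tau>] satisfies M \<le> L \<tau>\<^sup>2 M by the same integral formula, so they agree there, and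
   beyond \<tau> they agree by Gronwall's inequality.
   If S0 at r = N lies on the graph of w_V, the characterisation of w_V provides a solution
   of the autonomous system through this point.  Its clock component solves c' = -c\<^sup>2 with
   c N = 1/N, so c r = 1/r and the solution is a solution of the radial equation; hence it
   coincides with S0 for r \<ge> N, and S0 converges to u_\<infinity>(V).  Injectivity is immediate,
   since u0 and u_N are the values of the profile at 0 and at N. *)

theory Submission
  imports Defs
begin

unbundle inner_syntax

section \<open>Gronwall's inequality and the radial equation\<close>

lemma gronwall_zero:
  fixes f :: "real \<Rightarrow> 'b::real_inner"
  assumes "a \<le> b" and cont: "continuous_on {a..b} f"
    and der: "\<And>t. a < t \<Longrightarrow> t < b \<Longrightarrow> (f has_vector_derivative f' t) (at t)"
    and bound: "\<And>t. a < t \<Longrightarrow> t < b \<Longrightarrow> norm (f' t) \<le> K * norm (f t)"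
    and "f a = 0"
  shows "f b = 0"
proof (cases "a = b")
  case True
  then show ?thesis using \<open>f a = 0\<close> by simp
next
  case False
  with \<open>a \<le> b\<close> have "a < b" by simp
  \<comment> \<open>\<open>exp (-2Kt) \<parallel>f t\<parallel>\<^sup>2\<close> is nonincreasing and vanishes at \<open>a\<close>\<close>
  define \<psi> where "\<psi> s = exp (- 2 * K * s) * (f s \<bullet> f s)" for s
  define \<psi>' where "\<psi>' s = 2 * exp (- 2 * K * s) * (f s \<bullet> f' s - K * (f s \<bullet> f s))" for s
  have \<psi>_cont: "continuous_on {a..b} \<psi>"
    unfolding \<psi>_def by (intro continuous_intros cont)
  have \<psi>_der: "(\<psi> has_derivative (\<lambda>h. h * \<psi>' s)) (at s)" if "a < s" "s < b" for s
  proof -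
    have "(f has_derivative (\<lambda>h. h *\<^sub>R f' s)) (at s)"
      using der[OF that] by (simp add: has_vector_derivative_def)
    then show ?thesis
      unfolding \<psi>_def
      by (auto intro!: derivative_eq_intros simp: \<psi>'_def algebra_simps inner_commute)
  qed
  obtain \<xi> where \<xi>: "a < \<xi>" "\<xi> < b" "\<psi> b - \<psi> a = (b - a) * \<psi>' \<xi>"
    using mvt[OF \<open>a < b\<close> \<psi>_cont \<psi>_der] by auto
  have "f \<xi> \<bullet> f' \<xi> \<le> norm (f \<xi>) * (K * norm (f \<xi>))"
    using norm_cauchy_schwarz[of "f \<xi>" "f' \<xi>"] bound[OF \<xi>(1,2)]
    by (meson mult_left_mono norm_ge_zero order_trans)
  then have "\<psi>' \<xi> \<le> 0"
    by (simp add: \<psi>'_def mult_nonneg_nonpos power2_norm_eq_inner[symmetric] power2_eq_square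
        algebra_simps)
  then have "\<psi> b \<le> 0"
    using \<xi> \<open>f a = 0\<close> by (simp add: \<psi>_def mult_nonneg_nonpos)
  then have "f b \<bullet> f b \<le> 0"
    by (simp add: \<psi>_def mult_le_0_iff)
  then show ?thesis
    by (metis inner_eq_zero_iff inner_ge_zero order_antisym)
qed

definition radial_field :: "nat \<Rightarrow> ('a::real_vector \<Rightarrow> 'a) \<Rightarrow> real \<Rightarrow> 'a \<times> 'a \<Rightarrow> 'a \<times> 'a" where
  "radial_field n g r y = (snd y, - ((real n - 1) / r) *\<^sub>R snd y + g (fst y))"

lemma radial_field_diff:
  "radial_field n g r y - radial_field n g r z
     = (snd (y - z), - ((real n - 1) / r) *\<^sub>R snd (y - z) + (g (fst y) - g (fst z)))"
  by (simp add: radial_field_def algebra_simps)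

lemma has_vector_derivative_prod_iff:
  "(f has_vector_derivative (a, b)) (at x within S) \<longleftrightarrow>
     ((\<lambda>x. fst (f x)) has_vector_derivative a) (at x within S) \<and>
     ((\<lambda>x. snd (f x)) has_vector_derivative b) (at x within S)"
proof
  assume "(f has_vector_derivative (a, b)) (at x within S)"
  then show "((\<lambda>x. fst (f x)) has_vector_derivative a) (at x within S) \<and>
      ((\<lambda>x. snd (f x)) has_vector_derivative b) (at x within S)"
    unfolding has_vector_derivative_def
    by (auto dest: has_derivative_fst has_derivative_snd)
next
  assume "((\<lambda>x. fst (f x)) has_vector_derivative a) (at x within S) \<and>
      ((\<lambda>x. snd (f x)) has_vector_derivative b) (at x within S)"
  then show "(f has_vector_derivative (a, b)) (at x within S)"
    using has_vector_derivative_Pair by fastforce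
qed

lemma centered_sol_iff:
  "centered_sol n V u0 y \<longleftrightarrow>
     (\<forall>r>0. (y has_vector_derivative radial_field n (grad V) r (y r)) (at r)) \<and>
     (y \<longlongrightarrow> (u0, 0)) (at_right 0) \<and> (\<forall>r\<le>0. y r = (u0, 0))"
  by (simp add: centered_sol_def radial_field_def has_vector_derivative_prod_iff)

lemma norm_radial_field_diff_le:
  assumes "L-lipschitz_on UNIV g" and "0 < a" and "a \<le> r"
  shows "norm (radial_field n g r y - radial_field n g r z)
           \<le> (1 + \<bar>real n - 1\<bar> / a + L) * norm (y - z)"
proof -
  have v: "norm (snd y - snd z) \<le> norm (y - z)" and u: "norm (fst y - fst z) \<le> norm (y - z)"
    by (metis norm_snd_le prod.collapse fst_diff snd_diff)
      (metis norm_fst_le prod.collapse fst_diff snd_diff)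
  have "\<bar>real n - 1\<bar> / r \<le> \<bar>real n - 1\<bar> / a"
    using assms by (intro divide_left_mono) auto
  then have scaled: "\<bar>real n - 1\<bar> / r * norm (snd y - snd z) \<le> \<bar>real n - 1\<bar> / a * norm (y - z)"
    using v assms(2) by (intro mult_mono) auto
  have lip: "norm (g (fst y) - g (fst z)) \<le> L * norm (y - z)"
    using lipschitz_on_normD[OF assms(1)] u lipschitz_on_nonneg[OF assms(1)]
    by (meson UNIV_I mult_left_mono order_trans)
  have "radial_field n g r y - radial_field n g r z =
      (snd y - snd z, - ((real n - 1) / r) *\<^sub>R (snd y - snd z) + (g (fst y) - g (fst z)))"
    by (simp add: radial_field_diff)
  then have "norm (radial_field n g r y - radial_field n g r z)
      \<le> norm (snd y - snd z) + norm (- ((real n - 1) / r) *\<^sub>R (snd y - snd z) + (g (fst y) - g (fst z)))"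
    by (metis norm_Pair_le)
  also have "\<dots> \<le> norm (y - z) + (\<bar>real n - 1\<bar> / r * norm (snd y - snd z) + L * norm (y - z))"
    using v lip assms(2,3)
    by (intro add_mono order_trans[OF norm_triangle_ineq]) auto
  also have "\<dots> \<le> (1 + \<bar>real n - 1\<bar> / a + L) * norm (y - z)"
    using scaled by (simp add: algebra_simps)
  finally show ?thesis .
qed

lemma radial_ode_unique_forward:
  fixes g :: "'a::real_inner \<Rightarrow> 'a"
  assumes "L-lipschitz_on UNIV g" and "0 < a" and "a \<le> b"
    and "continuous_on {a..b} y" and "continuous_on {a..b} z"
    and "\<And>t. a < t \<Longrightarrow> t < b \<Longrightarrow> (y has_vector_derivative radial_field n g t (y t)) (at t)"
    and "\<And>t. a < t \<Longrightarrow> t < b \<Longrightarrow> (z has_vector_derivative radial_field n g t (z t)) (at t)"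
    and "y a = z a"
  shows "y b = z b"
proof -
  have "(\<lambda>t. y t - z t) b = 0"
  proof (rule gronwall_zero[where f' = "\<lambda>t. radial_field n g t (y t) - radial_field n g t (z t)"])
    show "continuous_on {a..b} (\<lambda>t. y t - z t)"
      using assms(4,5) by (intro continuous_intros)
    show "((\<lambda>t. y t - z t) has_vector_derivative
            radial_field n g t (y t) - radial_field n g t (z t)) (at t)" if "a < t" "t < b" for t
      using assms(6,7)[OF that] by (intro derivative_intros)
    show "norm (radial_field n g t (y t) - radial_field n g t (z t))
            \<le> (1 + \<bar>real n - 1\<bar> / a + L) * norm (y t - z t)" if "a < t" "t < b" for t
      using norm_radial_field_diff_le[OF assms(1,2)] that by simp
  qed (use assms in auto)
  then show ?thesis by simp
qed

section \<open>Potentials in Vquad have Lipschitz gradients\<close>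

lemma Ck_on_imp_continuous_on: "Ck_on m S f \<Longrightarrow> continuous_on S f"
  by (cases m) (auto intro: differentiable_imp_continuous_on)

lemma frechet_derivative_outside_ball:
  fixes f F :: "'a::real_normed_vector \<Rightarrow> 'b::real_normed_vector"
  assumes f: "\<And>x. R < norm x \<Longrightarrow> f x = F x" and F: "(F has_derivative F' x) (at x)"
    and x: "R < norm x"
  shows "frechet_derivative f (at x) = F' x"
proof -
  have "open {z::'a. R < norm z}"
    by (intro open_Collect_less continuous_intros)
  then have "(f has_derivative F' x) (at x)"
    by (rule has_derivative_transform_within_open[OF F]) (use x f in auto)
  then show ?thesis by (rule frechet_derivative_at[symmetric])
qed

lemma second_derivative_quadratic_tail:
  fixes V :: "'a::euclidean_space \<Rightarrow> real"
  assumes quad: "\<And>u. R \<le> norm u \<Longrightarrow> V u = (norm u)\<^sup>2 / 2" and x: "R < norm x"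
  shows "frechet_derivative (\<lambda>y. frechet_derivative V (at y) b) (at x) c = c \<bullet> b"
proof -
  have first: "frechet_derivative V (at y) = (\<lambda>h. y \<bullet> h)" if "R < norm y" for y
  proof (rule frechet_derivative_outside_ball[where F = "\<lambda>z. (z \<bullet> z) / 2"])
    show "((\<lambda>z. z \<bullet> z / 2) has_derivative (\<lambda>h. y \<bullet> h)) (at y)" for y
      by (auto intro!: derivative_eq_intros simp: inner_commute fun_eq_iff)
  qed (use quad that in \<open>auto simp: power2_norm_eq_inner\<close>)
  have "frechet_derivative (\<lambda>y. frechet_derivative V (at y) b) (at x) = (\<lambda>h. h \<bullet> b)"
    by (rule frechet_derivative_outside_ball[where F = "\<lambda>y. y \<bullet> b"])
       (use first x in \<open>auto intro!: derivative_eq_intros simp: inner_commute\<close>)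
  then show ?thesis by simp
qed

lemma Vquad_second_derivatives_bounded:
  fixes V :: "'a::euclidean_space \<Rightarrow> real"
  assumes V: "V \<in> Vquad (Suc k) R"
  obtains C where
    "\<And>x b c. b \<in> Basis \<Longrightarrow> c \<in> Basis \<Longrightarrow>
       \<bar>frechet_derivative (\<lambda>y. frechet_derivative V (at y) b) (at x) c\<bar> \<le> C"
proof -
  define D2 where "D2 b c x = frechet_derivative (\<lambda>y. frechet_derivative V (at y) b) (at x) c" for b c x
  have "Ck_on (Suc (Suc k)) UNIV V" using V by (simp add: Vquad_def)
  then have cont: "continuous_on UNIV (D2 b c)" for b c
    unfolding D2_def by (auto intro: Ck_on_imp_continuous_on)
  define S where "S x = (\<Sum>b\<in>Basis. \<Sum>c\<in>Basis. \<bar>D2 b c x\<bar>)" for x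
  have "continuous_on UNIV S"
    unfolding S_def by (intro continuous_intros cont)
  then have "compact (S ` cball 0 R)"
    by (rule compact_continuous_image[OF continuous_on_subset]) auto
  then obtain C0 where "\<forall>y\<in>S ` cball 0 R. norm y \<le> C0"
    by (meson bounded_iff compact_imp_bounded)
  then have C0: "\<And>x. x \<in> cball 0 R \<Longrightarrow> \<bar>S x\<bar> \<le> C0"
    by auto
  have "\<bar>D2 b c x\<bar> \<le> max C0 1" if "b \<in> Basis" "c \<in> Basis" for b c x
  proof (cases "norm x \<le> R")
    case True
    have "\<bar>D2 b c x\<bar> \<le> (\<Sum>c'\<in>Basis. \<bar>D2 b c' x\<bar>)"
      by (rule member_le_sum) (use that in auto)
    also have "\<dots> \<le> S x"
      unfolding S_def by (rule member_le_sum) (use that in \<open>auto intro: sum_nonneg\<close>)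
    finally have "\<bar>D2 b c x\<bar> \<le> S x" .
    then show ?thesis using C0[of x] True by auto
  next
    case False
    then have "D2 b c x = c \<bullet> b"
      unfolding D2_def using V by (intro second_derivative_quadratic_tail) (auto simp: Vquad_def)
    then show ?thesis using that by (auto simp: inner_Basis)
  qed
  then show ?thesis using that unfolding D2_def by blast
qed

lemma norm_sum_Basis_linear_le:
  fixes D :: "'a::euclidean_space \<Rightarrow> 'a \<Rightarrow> real"
  assumes lin: "\<And>b. b \<in> Basis \<Longrightarrow> linear (D b)"
    and bound: "\<And>b c. b \<in> Basis \<Longrightarrow> c \<in> Basis \<Longrightarrow> \<bar>D b c\<bar> \<le> C"
  shows "norm (\<Sum>b\<in>Basis. D b h *\<^sub>R b) \<le> real DIM('a) * real DIM('a) * \<bar>C\<bar> * norm h"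
proof -
  have "\<bar>D b h\<bar> \<le> real DIM('a) * (norm h * \<bar>C\<bar>)" if "b \<in> Basis" for b
  proof -
    have "D b h = (\<Sum>c\<in>Basis. (h \<bullet> c) * D b c)"
      by (subst euclidean_representation[of h, symmetric])
         (simp add: linear_sum[OF lin[OF that]] linear_scale[OF lin[OF that]])
    then have "\<bar>D b h\<bar> \<le> (\<Sum>c\<in>Basis. \<bar>h \<bullet> c\<bar> * \<bar>D b c\<bar>)"
      by (simp add: abs_mult[symmetric] sum_abs)
    also have "\<dots> \<le> (\<Sum>c\<in>(Basis::'a set). norm h * \<bar>C\<bar>)"
      using bound[OF that] Basis_le_norm
      by (intro sum_mono mult_mono) (auto intro: order_trans[OF _ abs_ge_self])
    finally show ?thesis by simp
  qed
  then have "norm (\<Sum>b\<in>Basis. D b h *\<^sub>R b) \<le> (\<Sum>b\<in>(Basis::'a set). real DIM('a) * (norm h * \<bar>C\<bar>))"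
    by (intro order_trans[OF norm_sum] sum_mono) auto
  then show ?thesis
    by (simp add: algebra_simps)
qed

lemma Vquad_lipschitz_grad:
  fixes V :: "'a::euclidean_space \<Rightarrow> real"
  assumes V: "V \<in> Vquad k R" and k: "1 \<le> k"
  obtains L where "L-lipschitz_on UNIV (grad V)"
proof -
  obtain k' where k': "k = Suc k'" using k by (cases k) auto
  define Dv where "Dv b x = frechet_derivative V (at x) b" for b x
  obtain C where C: "\<And>x b c. b \<in> Basis \<Longrightarrow> c \<in> Basis \<Longrightarrow> \<bar>frechet_derivative (Dv b) (at x) c\<bar> \<le> C"
    using Vquad_second_derivatives_bounded[of V k' R] V k' unfolding Dv_def by auto
  have "Ck_on (Suc (Suc k')) UNIV V" using V k' by (simp add: Vquad_def)
  then have Dv_diff: "Dv b differentiable (at x)" for b x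
    unfolding Dv_def by (auto simp: differentiable_on_def)
  define G' where "G' x h = (\<Sum>b\<in>Basis. frechet_derivative (Dv b) (at x) h *\<^sub>R b)" for x h
  have "grad V = (\<lambda>x. \<Sum>b\<in>Basis. Dv b x *\<^sub>R b)"
    by (simp add: grad_def Dv_def fun_eq_iff)
  then have der: "(grad V has_derivative G' x) (at x within UNIV)" for x
    unfolding G'_def
    by (simp only:) (intro has_derivative_sum has_derivative_scaleR_left
        frechet_derivative_works[THEN iffD1] Dv_diff)
  have "onorm (G' x) \<le> real DIM('a) * real DIM('a) * \<bar>C\<bar>" for x
    unfolding G'_def
    using Dv_diff frechet_derivative_works has_derivative_linear C
    by (intro onorm_le norm_sum_Basis_linear_le) blast+
  then have "(real DIM('a) * real DIM('a) * \<bar>C\<bar>)-lipschitz_on UNIV (grad V)"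
    by (intro bounded_derivative_imp_lipschitz[OF der]) auto
  then show ?thesis by (rule that)
qed

section \<open>Existence of centred solutions\<close>

text \<open>The velocity \<open>v\<close> with \<open>v 0 = 0\<close> of \<open>v' = - (n - 1) / s \<cdot> v + F s\<close>, obtained with the
  integrating factor \<open>s\<^sup>n\<^sup>-\<^sup>1\<close>.\<close>

definition radial_primitive :: "nat \<Rightarrow> (real \<Rightarrow> 'a::real_normed_vector) \<Rightarrow> real \<Rightarrow> 'a" where
  "radial_primitive n F s =
     (if s \<le> 0 then 0 else (1 / s ^ (n - 1)) *\<^sub>R integral {0..s} (\<lambda>t. t ^ (n - 1) *\<^sub>R F t))"

lemma radial_primitive_nonpos [simp]: "s \<le> 0 \<Longrightarrow> radial_primitive n F s = 0"
  by (simp add: radial_primitive_def)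

lemma has_real_derivative_inverse_power:
  "0 < s \<Longrightarrow> ((\<lambda>s. 1 / s ^ m) has_real_derivative - (real m / s) * (1 / s ^ m)) (at s)"
  by (cases m) (simp, (rule derivative_eq_intros refl | simp)+)

lemma has_vector_derivative_integral_at:
  fixes F :: "real \<Rightarrow> 'a::banach"
  assumes "continuous_on UNIV F" and "0 < s"
  shows "((\<lambda>s. integral {0..s} F) has_vector_derivative F s) (at s)"
proof -
  have "((\<lambda>s. integral {0..s} F) has_vector_derivative F s) (at s within {0..s + 1})"
    by (rule integral_has_vector_derivative) (use assms in \<open>auto intro: continuous_on_subset\<close>)
  moreover have "at s within {0..s + 1} = at s"
    by (rule at_within_interior) (use assms in auto)
  ultimately show ?thesis by simp
qed

lemma has_vector_derivative_radial_primitive: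
  fixes F :: "real \<Rightarrow> 'a::banach"
  assumes "1 \<le> n" and F: "continuous_on UNIV F" and s: "0 < s"
  shows "(radial_primitive n F has_vector_derivative
           - ((real n - 1) / s) *\<^sub>R radial_primitive n F s + F s) (at s)"
proof -
  define G where "G s = integral {0..s} (\<lambda>t. t ^ (n - 1) *\<^sub>R F t)" for s
  have "(G has_vector_derivative s ^ (n - 1) *\<^sub>R F s) (at s)"
    unfolding G_def by (intro has_vector_derivative_integral_at continuous_intros F s)
  then have "((\<lambda>s. (1 / s ^ (n - 1)) *\<^sub>R G s) has_vector_derivative
      (1 / s ^ (n - 1)) *\<^sub>R (s ^ (n - 1) *\<^sub>R F s)
      + (- (real (n - 1) / s) * (1 / s ^ (n - 1))) *\<^sub>R G s) (at s)"
    by (intro has_vector_derivative_scaleR has_real_derivative_inverse_power s)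
  moreover have "(1 / s ^ (n - 1)) *\<^sub>R (s ^ (n - 1) *\<^sub>R F s)
      + (- (real (n - 1) / s) * (1 / s ^ (n - 1))) *\<^sub>R G s
      = - ((real n - 1) / s) *\<^sub>R radial_primitive n F s + F s"
    using s assms(1) by (simp add: radial_primitive_def G_def of_nat_diff)
  ultimately have "((\<lambda>s. (1 / s ^ (n - 1)) *\<^sub>R G s) has_vector_derivative
      - ((real n - 1) / s) *\<^sub>R radial_primitive n F s + F s) (at s)"
    by simp
  then show ?thesis
    by (rule has_vector_derivative_transform_within_open[where S = "{0<..}"])
       (use s in \<open>auto simp: radial_primitive_def G_def\<close>)
qed

lemma norm_radial_primitive_le:
  fixes F :: "real \<Rightarrow> 'a::euclidean_space"
  assumes s: "0 \<le> s" and F: "continuous_on {0..s} F" and f: "f integrable_on {0..s}"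
    and bound: "\<And>t. t \<in> {0..s} \<Longrightarrow> norm (F t) \<le> f t"
  shows "norm (radial_primitive n F s) \<le> integral {0..s} f"
proof (cases "s = 0")
  case False
  with s have "0 < s" by simp
  have "norm (integral {0..s} (\<lambda>t. t ^ (n - 1) *\<^sub>R F t)) \<le> integral {0..s} (\<lambda>t. s ^ (n - 1) * f t)"
  proof (rule integral_norm_bound_integral)
    show "(\<lambda>t. t ^ (n - 1) *\<^sub>R F t) integrable_on {0..s}"
      by (intro integrable_continuous_real continuous_intros F)
    show "(\<lambda>t. s ^ (n - 1) * f t) integrable_on {0..s}"
      by (intro integrable_on_mult_right f)
    fix t assume t: "t \<in> {0..s}"
    have "norm (t ^ (n - 1) *\<^sub>R F t) = t ^ (n - 1) * norm (F t)"
      using t by simp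
    also have "\<dots> \<le> s ^ (n - 1) * f t"
      using t bound[OF t] by (intro mult_mono power_mono) (auto intro: order_trans[OF norm_ge_zero])
    finally show "norm (t ^ (n - 1) *\<^sub>R F t) \<le> s ^ (n - 1) * f t" .
  qed
  then show ?thesis
    using \<open>0 < s\<close> by (simp add: radial_primitive_def divide_le_eq mult.commute)
qed simp

lemma radial_primitive_tendsto_zero:
  fixes F :: "real \<Rightarrow> 'a::euclidean_space"
  assumes F: "continuous_on UNIV F"
  shows "(radial_primitive n F \<longlongrightarrow> 0) (at 0)"
proof -
  obtain B where B: "\<And>t. t \<in> {0..1} \<Longrightarrow> norm (F t) \<le> B"
    using compact_imp_bounded[OF compact_continuous_image[OF continuous_on_subset[OF F]]]
    by (metis bounded_iff compact_Icc image_eqI subset_UNIV)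
  have "norm (radial_primitive n F t) \<le> \<bar>t\<bar> * B" if "\<bar>t\<bar> < 1" for t
  proof (cases "0 \<le> t")
    case True
    have "norm (radial_primitive n F t) \<le> integral {0..t} (\<lambda>_. B)"
      using True that B by (intro norm_radial_primitive_le continuous_on_subset[OF F]) auto
    then show ?thesis using True by simp
  next
    case False
    have "0 \<le> B" using B[of 0] by (auto intro: order_trans[OF norm_ge_zero])
    then show ?thesis using False by (simp add: mult_nonpos_nonneg)
  qed
  then have "\<forall>\<^sub>F t in at 0. norm (radial_primitive n F t) \<le> \<bar>t\<bar> * B"
    unfolding eventually_at by (intro exI[of _ 1]) (auto simp: dist_norm)
  moreover have "((\<lambda>t. \<bar>t\<bar> * B) \<longlongrightarrow> 0) (at 0)"
    by (rule tendsto_eq_intros refl | simp)+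
  ultimately show ?thesis
    by (rule Lim_null_comparison)
qed

lemma continuous_on_radial_primitive:
  fixes F :: "real \<Rightarrow> 'a::euclidean_space"
  assumes "1 \<le> n" and F: "continuous_on UNIV F"
  shows "continuous_on UNIV (radial_primitive n F)"
proof -
  have "isCont (radial_primitive n F) s" for s
  proof -
    consider "0 < s" | "s = 0" | "s < 0" by linarith
    then show ?thesis
    proof cases
      case 1
      then show ?thesis
        using has_vector_derivative_radial_primitive[OF assms] has_vector_derivative_continuous by blast
    next
      case 2
      then show ?thesis
        using radial_primitive_tendsto_zero[OF F] by (simp add: isCont_def)
    next
      case 3
      have "((\<lambda>_. 0) has_vector_derivative 0) (at s)"
        by (rule has_vector_derivative_const)
      then have "(radial_primitive n F has_vector_derivative 0) (at s)"
        by (rule has_vector_derivative_transform_within_open[where S = "{..<0}"]) (use 3 in auto)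
      then show ?thesis by (rule has_vector_derivative_continuous)
    qed
  qed
  then show ?thesis by (simp add: continuous_at_imp_continuous_on)
qed

lemma radial_primitive_diff:
  fixes F G :: "real \<Rightarrow> 'a::euclidean_space"
  assumes "continuous_on UNIV F" "continuous_on UNIV G"
  shows "radial_primitive n F s - radial_primitive n G s = radial_primitive n (\<lambda>t. F t - G t) s"
proof -
  have "integral {0..s} (\<lambda>t. t ^ (n - 1) *\<^sub>R F t) - integral {0..s} (\<lambda>t. t ^ (n - 1) *\<^sub>R G t)
      = integral {0..s} (\<lambda>t. t ^ (n - 1) *\<^sub>R (F t - G t))"
    by (subst integral_diff[symmetric])
       (auto intro!: integrable_continuous_real continuous_intros continuous_on_subset[OF assms(1)]
          continuous_on_subset[OF assms(2)] simp: scaleR_diff_right)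
  then show ?thesis by (simp add: radial_primitive_def scaleR_diff_right[symmetric])
qed

lemma integral_exp_le:
  fixes lam s C :: real
  assumes "0 < lam" and "0 \<le> s" and "0 \<le> C"
  shows "(\<lambda>t. C * exp (lam * t)) integrable_on {0..s}"
    and "integral {0..s} (\<lambda>t. C * exp (lam * t)) \<le> C / lam * exp (lam * s)"
proof -
  have "((\<lambda>t. exp (lam * t)) has_integral (exp (lam * s) / lam - exp (lam * 0) / lam)) {0..s}"
    by (rule fundamental_theorem_of_calculus[OF \<open>0 \<le> s\<close>])
       (use assms in \<open>auto intro!: derivative_eq_intros
          simp: has_real_derivative_iff_has_vector_derivative[symmetric]\<close>)
  then have int: "((\<lambda>t. C * exp (lam * t)) has_integral C * (exp (lam * s) / lam - 1 / lam)) {0..s}"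
    by (simp add: has_integral_mult_right)
  then show "(\<lambda>t. C * exp (lam * t)) integrable_on {0..s}" by blast
  have "C * (exp (lam * s) / lam - 1 / lam) \<le> C / lam * exp (lam * s)"
    using assms by (simp add: algebra_simps)
  then show "integral {0..s} (\<lambda>t. C * exp (lam * t)) \<le> C / lam * exp (lam * s)"
    using integral_unique[OF int] by linarith
qed

lemma
  fixes F :: "real \<Rightarrow> 'a::euclidean_space"
  assumes F: "continuous_on {0..s} F" and "0 \<le> s" and "0 < lam"
    and bound: "\<And>t. t \<in> {0..s} \<Longrightarrow> norm (F t) \<le> C * exp (lam * t)"
  shows norm_integral_le_exp: "norm (integral {0..s} F) \<le> C / lam * exp (lam * s)"
    and norm_radial_primitive_le_exp: "norm (radial_primitive n F s) \<le> C / lam * exp (lam * s)"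
proof -
  have "0 \<le> C"
    using bound[of 0] \<open>0 \<le> s\<close> by (auto intro: order_trans[OF norm_ge_zero])
  note exp_int = integral_exp_le[OF \<open>0 < lam\<close> \<open>0 \<le> s\<close> this]
  show "norm (integral {0..s} F) \<le> C / lam * exp (lam * s)"
    by (rule order_trans[OF integral_norm_bound_integral[OF integrable_continuous_real[OF F]
          exp_int(1) bound] exp_int(2)])
  show "norm (radial_primitive n F s) \<le> C / lam * exp (lam * s)"
    by (rule order_trans[OF norm_radial_primitive_le[OF \<open>0 \<le> s\<close> F exp_int(1) bound] exp_int(2)])
qed

lemma norm_integral_radial_primitive_le_exp:
  fixes F :: "real \<Rightarrow> 'a::euclidean_space"
  assumes "1 \<le> n" and F: "continuous_on UNIV F" and "0 \<le> t" and "0 < lam"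
    and bound: "\<And>s. s \<in> {0..t} \<Longrightarrow> norm (F s) \<le> C * exp (lam * s)"
  shows "norm (integral {0..t} (radial_primitive n F)) \<le> C / lam\<^sup>2 * exp (lam * t)"
proof -
  have "norm (radial_primitive n F s) \<le> C / lam * exp (lam * s)" if "s \<in> {0..t}" for s
    using that bound \<open>0 < lam\<close>
    by (intro norm_radial_primitive_le_exp continuous_on_subset[OF F]) auto
  then have "norm (integral {0..t} (radial_primitive n F)) \<le> C / lam / lam * exp (lam * t)"
    using \<open>0 \<le> t\<close> \<open>0 < lam\<close>
    by (intro norm_integral_le_exp continuous_on_subset[OF continuous_on_radial_primitive[OF \<open>1 \<le> n\<close> F]])
       auto
  then show ?thesis by (simp add: power2_eq_square)
qed

lemma continuous_on_integral_atLeast: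
  fixes f :: "real \<Rightarrow> 'a::banach"
  assumes "continuous_on UNIV f"
  shows "continuous_on {a..} (\<lambda>t. integral {a..t} f)"
  unfolding continuous_on_eq_continuous_within
proof
  fix x assume "x \<in> {a..}"
  have "continuous_on {a..x + 1} (\<lambda>t. integral {a..t} f)"
    by (intro indefinite_integral_continuous_1 integrable_continuous_real
        continuous_on_subset[OF assms]) auto
  then have "continuous (at x within {a..x + 1}) (\<lambda>t. integral {a..t} f)"
    using \<open>x \<in> {a..}\<close> by (simp add: continuous_on_eq_continuous_within)
  moreover have "at x within {a..} = at x within {a..x + 1}"
    by (rule at_within_nhd[where S = "{..<x + 1}"]) auto
  ultimately show "continuous (at x within {a..}) (\<lambda>t. integral {a..t} f)"
    by (simp add: continuous_within)
qed

definition radial_picard :: "nat \<Rightarrow> ('a \<Rightarrow> 'a) \<Rightarrow> 'a \<Rightarrow> (real \<Rightarrow> 'a) \<Rightarrow> real \<Rightarrow> 'a::euclidean_space" where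
  "radial_picard n g u0 u t = u0 + integral {0..t} (radial_primitive n (\<lambda>s. g (u s)))"

lemma continuous_on_radial_picard:
  fixes g :: "'a::euclidean_space \<Rightarrow> 'a"
  assumes "1 \<le> n" and "L-lipschitz_on UNIV g" and "continuous_on UNIV u"
  shows "continuous_on {0..} (radial_picard n g u0 u)"
proof -
  have "continuous_on UNIV (\<lambda>s. g (u s))"
    using lipschitz_on_continuous_on[OF assms(2)] assms(3) by (rule continuous_on_compose2) auto
  then show ?thesis
    unfolding radial_picard_def
    by (intro continuous_intros continuous_on_integral_atLeast continuous_on_radial_primitive assms(1))
qed

lemma norm_radial_picard_diff_le:
  fixes g :: "'a::euclidean_space \<Rightarrow> 'a"
  assumes "1 \<le> n" and g: "L-lipschitz_on UNIV g"
    and u: "continuous_on UNIV u" and w: "continuous_on UNIV w" and "0 \<le> t" and "0 < lam"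
    and close: "\<And>s. s \<in> {0..t} \<Longrightarrow> norm (u s - w s) \<le> d * exp (lam * s)"
  shows "norm (radial_picard n g u0 u t - radial_picard n g u0 w t) \<le> L * d / lam\<^sup>2 * exp (lam * t)"
proof -
  have gc: "continuous_on UNIV g" using lipschitz_on_continuous_on[OF g] .
  have gu: "continuous_on UNIV (\<lambda>s. g (u s))" and gw: "continuous_on UNIV (\<lambda>s. g (w s))"
    using continuous_on_compose2[OF gc u] continuous_on_compose2[OF gc w] by auto
  define H where "H s = g (u s) - g (w s)" for s
  have "radial_picard n g u0 u t - radial_picard n g u0 w t = integral {0..t} (radial_primitive n H)"
    unfolding radial_picard_def H_def radial_primitive_diff[OF gu gw, symmetric]
    by (subst integral_diff)
       (auto intro!: integrable_continuous_real continuous_on_radial_primitive assms(1) gu gw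
         intro: continuous_on_subset)
  also have "norm \<dots> \<le> (L * d) / lam\<^sup>2 * exp (lam * t)"
  proof (rule norm_integral_radial_primitive_le_exp[OF assms(1) _ \<open>0 \<le> t\<close> \<open>0 < lam\<close>])
    show "continuous_on UNIV H" unfolding H_def by (intro continuous_intros gu gw)
    fix s assume s: "s \<in> {0..t}"
    have "norm (H s) \<le> L * norm (u s - w s)"
      unfolding H_def using lipschitz_on_normD[OF g] by simp
    also have "\<dots> \<le> L * (d * exp (lam * s))"
      using close[OF s] lipschitz_on_nonneg[OF g] by (rule mult_left_mono)
    finally show "norm (H s) \<le> L * d * exp (lam * s)" by simp
  qed
  finally show ?thesis by simp
qed

lemma radial_picard_exp_bound:
  fixes g :: "'a::euclidean_space \<Rightarrow> 'a"
  assumes "1 \<le> n" and g: "L-lipschitz_on UNIV g" and u: "continuous_on UNIV u" and "0 < lam"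
    and bound: "\<And>s. 0 \<le> s \<Longrightarrow> norm (u s) \<le> P * exp (lam * s)"
  shows "\<exists>B. \<forall>t\<ge>0. norm (radial_picard n g u0 u t) \<le> B * exp (lam * t)"
proof (intro exI allI impI)
  fix t :: real assume "0 \<le> t"
  have "norm (radial_picard n g u0 u t - radial_picard n g u0 (\<lambda>_. 0) t) \<le> L * P / lam\<^sup>2 * exp (lam * t)"
    using bound by (intro norm_radial_picard_diff_le[OF assms(1) g u _ \<open>0 \<le> t\<close> \<open>0 < lam\<close>]) auto
  moreover have "norm (integral {0..t} (radial_primitive n (\<lambda>_. g 0))) \<le> norm (g 0) / lam\<^sup>2 * exp (lam * t)"
    using \<open>0 \<le> t\<close> \<open>0 < lam\<close>
    by (intro norm_integral_radial_primitive_le_exp[OF assms(1)]) (auto simp: mult_le_cancel_left1)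
  moreover have "norm u0 \<le> norm u0 * exp (lam * t)"
    using \<open>0 \<le> t\<close> \<open>0 < lam\<close> by (simp add: mult_le_cancel_left1)
  moreover
  let ?I = "integral {0..t} (radial_primitive n (\<lambda>s. g (u s)))"
  have "norm (u0 + ?I) \<le> norm u0 + norm ?I" by (rule norm_triangle_ineq)
  moreover have "norm ?I \<le> norm (integral {0..t} (radial_primitive n (\<lambda>_. g 0)))
      + norm (radial_picard n g u0 u t - radial_picard n g u0 (\<lambda>_. 0) t)"
    unfolding radial_picard_def by (simp add: norm_triangle_sub)
  ultimately show "norm (radial_picard n g u0 u t)
      \<le> (norm u0 + norm (g 0) / lam\<^sup>2 + L * P / lam\<^sup>2) * exp (lam * t)"
    unfolding distrib_right radial_picard_def[of n g u0 u] by linarith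
qed

text \<open>A bounded continuous \<open>\<phi>\<close> encodes the function \<open>u t = e\<^sup>\<lambda>\<^sup>t \<phi> t\<close> (\<open>t \<ge> 0\<close>); in these
  coordinates the Picard map becomes a contraction of the sup norm once \<open>\<lambda>\<^sup>2 > L\<close>.\<close>

definition exp_weight :: "real \<Rightarrow> (real \<Rightarrow>\<^sub>C 'a) \<Rightarrow> real \<Rightarrow> 'a::real_normed_vector" where
  "exp_weight lam \<phi> t = exp (lam * max t 0) *\<^sub>R apply_bcontfun \<phi> t"

definition weighted_picard ::
    "nat \<Rightarrow> ('a \<Rightarrow> 'a) \<Rightarrow> 'a \<Rightarrow> real \<Rightarrow> (real \<Rightarrow>\<^sub>C 'a) \<Rightarrow> real \<Rightarrow> 'a::euclidean_space" where
  "weighted_picard n g u0 lam \<phi> t =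
     exp (- lam * max t 0) *\<^sub>R radial_picard n g u0 (exp_weight lam \<phi>) (max t 0)"

lemma continuous_on_exp_weight: "continuous_on S (exp_weight lam \<phi>)"
  unfolding exp_weight_def by (intro continuous_intros) auto

lemma weighted_picard_bcontfun:
  fixes g :: "'a::euclidean_space \<Rightarrow> 'a"
  assumes "1 \<le> n" and "L-lipschitz_on UNIV g" and "0 < lam"
  shows "weighted_picard n g u0 lam \<phi> \<in> bcontfun"
proof -
  have "norm (exp_weight lam \<phi> s) \<le> norm \<phi> * exp (lam * s)" if "0 \<le> s" for s
    using that norm_bounded[of \<phi> s] by (simp add: exp_weight_def mult.commute)
  then obtain B where B: "\<And>t. 0 \<le> t \<Longrightarrow> norm (radial_picard n g u0 (exp_weight lam \<phi>) t) \<le> B * exp (lam * t)"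
    using radial_picard_exp_bound[OF assms(1,2) continuous_on_exp_weight assms(3)] by blast
  have "norm (weighted_picard n g u0 lam \<phi> t) \<le> B" for t
  proof -
    have "norm (weighted_picard n g u0 lam \<phi> t) \<le> exp (- lam * max t 0) * (B * exp (lam * max t 0))"
      unfolding weighted_picard_def by (simp add: B mult_left_mono)
    also have "\<dots> = B" by (simp add: exp_minus field_simps)
    finally show ?thesis .
  qed
  moreover have "continuous_on UNIV (weighted_picard n g u0 lam \<phi>)"
    unfolding weighted_picard_def
    by (rule continuous_on_compose2[of "{0..}"
          "\<lambda>t. exp (- lam * t) *\<^sub>R radial_picard n g u0 (exp_weight lam \<phi>) t"])
       (auto intro!: continuous_intros continuous_on_radial_picard[OF assms(1,2) continuous_on_exp_weight])
  ultimately show ?thesis by (intro bcontfun_normI)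
qed

lemma dist_weighted_picard_le:
  fixes g :: "'a::euclidean_space \<Rightarrow> 'a"
  assumes "1 \<le> n" and "L-lipschitz_on UNIV g" and "0 < lam"
  shows "dist (Bcontfun (weighted_picard n g u0 lam \<phi>)) (Bcontfun (weighted_picard n g u0 lam \<psi>))
           \<le> L / lam\<^sup>2 * dist \<phi> \<psi>"
proof (rule dist_bound)
  fix t :: real
  define s where "s = max t 0"
  have "norm (exp_weight lam \<phi> r - exp_weight lam \<psi> r) \<le> dist \<phi> \<psi> * exp (lam * r)" if "0 \<le> r" for r
    using that dist_bounded[of \<phi> r \<psi>]
    by (simp add: exp_weight_def dist_norm scaleR_diff_right[symmetric] mult.commute)
  then have "norm (radial_picard n g u0 (exp_weight lam \<phi>) s - radial_picard n g u0 (exp_weight lam \<psi>) s)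
      \<le> L * dist \<phi> \<psi> / lam\<^sup>2 * exp (lam * s)"
    by (intro norm_radial_picard_diff_le[OF assms(1,2) continuous_on_exp_weight continuous_on_exp_weight
          _ assms(3)]) (auto simp: s_def)
  then have "exp (- lam * s) * norm (radial_picard n g u0 (exp_weight lam \<phi>) s
      - radial_picard n g u0 (exp_weight lam \<psi>) s) \<le> L / lam\<^sup>2 * dist \<phi> \<psi>"
    by (simp add: exp_minus field_simps)
  then show "dist (apply_bcontfun (Bcontfun (weighted_picard n g u0 lam \<phi>)) t)
      (apply_bcontfun (Bcontfun (weighted_picard n g u0 lam \<psi>)) t) \<le> L / lam\<^sup>2 * dist \<phi> \<psi>"
    by (simp add: Bcontfun_inverse[OF weighted_picard_bcontfun[OF assms]] weighted_picard_def
        s_def[symmetric] dist_norm scaleR_diff_right[symmetric])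
qed

lemma radial_picard_fixed_point:
  fixes g :: "'a::euclidean_space \<Rightarrow> 'a"
  assumes "1 \<le> n" and g: "L-lipschitz_on UNIV g"
  obtains u where "continuous_on UNIV u" and "\<And>t. 0 \<le> t \<Longrightarrow> u t = radial_picard n g u0 u t"
proof -
  define lam where "lam = 2 * L + 1"
  have L: "0 \<le> L" using lipschitz_on_nonneg[OF g] .
  then have "0 < lam" "1 \<le> lam" "L < lam" by (simp_all add: lam_def)
  moreover have "lam \<le> lam\<^sup>2"
    using mult_left_mono[OF \<open>1 \<le> lam\<close>, of lam] \<open>0 < lam\<close> by (simp add: power2_eq_square)
  ultimately have "L < lam\<^sup>2" by linarith
  then have "L / lam\<^sup>2 < 1" using \<open>0 < lam\<close> by simp
  then obtain \<phi> where fixed: "Bcontfun (weighted_picard n g u0 lam \<phi>) = \<phi>"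
    using banach_fix_type[of "L / lam\<^sup>2" "\<lambda>\<phi>. Bcontfun (weighted_picard n g u0 lam \<phi>)"]
      dist_weighted_picard_le[OF assms \<open>0 < lam\<close>] L by auto
  show ?thesis
  proof (rule that[OF continuous_on_exp_weight])
    fix t :: real assume "0 \<le> t"
    have "apply_bcontfun \<phi> t = weighted_picard n g u0 lam \<phi> t"
      by (subst fixed[symmetric]) (simp add: Bcontfun_inverse[OF weighted_picard_bcontfun[OF assms \<open>0 < lam\<close>]])
    then show "exp_weight lam \<phi> t = radial_picard n g u0 (exp_weight lam \<phi>) t"
      using \<open>0 \<le> t\<close> by (simp add: exp_weight_def weighted_picard_def exp_minus)
  qed
qed

lemma centered_sol_exists:
  fixes V :: "'a::euclidean_space \<Rightarrow> real"
  assumes "1 \<le> n" and lip: "L-lipschitz_on UNIV (grad V)"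
  obtains y where "centered_sol n V u0 y"
proof -
  obtain u where u: "continuous_on UNIV u"
    and fixed: "\<And>t. 0 \<le> t \<Longrightarrow> u t = radial_picard n (grad V) u0 u t"
    using radial_picard_fixed_point[OF assms] by blast
  define F where "F s = grad V (u s)" for s
  have F: "continuous_on UNIV F"
    unfolding F_def using lipschitz_on_continuous_on[OF lip] u by (rule continuous_on_compose2) auto
  have v: "continuous_on UNIV (radial_primitive n F)"
    by (rule continuous_on_radial_primitive[OF \<open>1 \<le> n\<close> F])
  define y where "y r = (u (max r 0), radial_primitive n F r)" for r
  have "u 0 = u0" using fixed[of 0] by (simp add: radial_picard_def)
  then have y_nonpos: "y r = (u0, 0)" if "r \<le> 0" for r
    using that by (simp add: y_def)
  have "(y has_vector_derivative radial_field n (grad V) r (y r)) (at r)" if "0 < r" for r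
  proof -
    have "((\<lambda>s. u0 + integral {0..s} (radial_primitive n F)) has_vector_derivative radial_primitive n F r) (at r)"
      using has_vector_derivative_integral_at[OF v \<open>0 < r\<close>] by (auto intro!: derivative_eq_intros)
    then have "((\<lambda>s. u (max s 0)) has_vector_derivative radial_primitive n F r) (at r)"
      by (rule has_vector_derivative_transform_within_open[where S = "{0<..}"])
         (use that in \<open>auto simp: fixed radial_picard_def F_def[abs_def]\<close>)
    then have "((\<lambda>s. (u (max s 0), radial_primitive n F s)) has_vector_derivative
        (radial_primitive n F r, - ((real n - 1) / r) *\<^sub>R radial_primitive n F r + F r)) (at r)"
      using has_vector_derivative_radial_primitive[OF \<open>1 \<le> n\<close> F \<open>0 < r\<close>]
      by (rule has_vector_derivative_Pair)
    then show ?thesis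
      using that by (simp add: y_def[abs_def] radial_field_def F_def)
  qed
  moreover have "(y \<longlongrightarrow> (u0, 0)) (at_right 0)"
  proof -
    have "continuous_on UNIV y"
      unfolding y_def by (intro continuous_intros v continuous_on_compose2[OF u]) auto
    then have "(y \<longlongrightarrow> y 0) (at 0)"
      by (simp add: continuous_on_def)
    then show ?thesis
      using y_nonpos[of 0] by (simp add: filterlim_at_split)
  qed
  ultimately have "centered_sol n V u0 y"
    using y_nonpos by (simp add: centered_sol_iff)
  then show ?thesis by (rule that)
qed

section \<open>Uniqueness of centred solutions\<close>

lemma centered_sol_continuous:
  assumes "centered_sol n V u0 y"
  shows "continuous_on {0..} y"
  unfolding continuous_on_eq_continuous_within
proof
  fix r :: real assume "r \<in> {0..}"
  show "continuous (at r within {0..}) y"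
  proof (cases "r = 0")
    case True
    have "at (0::real) within {0..} = at_right 0"
      by (rule at_within_nhd[where S = UNIV]) auto
    then show ?thesis
      using assms True by (simp add: centered_sol_iff continuous_within)
  next
    case False
    with \<open>r \<in> {0..}\<close> have "0 < r" by simp
    then have "(y has_vector_derivative radial_field n (grad V) r (y r)) (at r)"
      using assms by (simp add: centered_sol_iff)
    then show ?thesis
      by (rule continuous_at_imp_continuous_within[OF has_vector_derivative_continuous])
  qed
qed

lemma norm_diff_le_of_vector_derivative_bound:
  fixes f :: "real \<Rightarrow> 'a::real_inner"
  assumes "a \<le> b" and cont: "continuous_on {a..b} f"
    and der: "\<And>t. a < t \<Longrightarrow> t < b \<Longrightarrow> (f has_vector_derivative f' t) (at t)"
    and bound: "\<And>t. a < t \<Longrightarrow> t < b \<Longrightarrow> norm (f' t) \<le> B"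
  shows "norm (f b - f a) \<le> B * (b - a)"
proof (cases "a = b")
  case False
  with \<open>a \<le> b\<close> have "a < b" by simp
  have fder: "(f has_derivative (\<lambda>d. d *\<^sub>R f' t)) (at t)" if "a < t" "t < b" for t
    using der[OF that] by (simp add: has_vector_derivative_def)
  obtain x where x: "a < x" "x < b" and "norm (f b - f a) \<le> norm ((b - a) *\<^sub>R f' x)"
    using mvt_general[OF \<open>a < b\<close> cont fder] by auto
  then have "norm (f b - f a) \<le> (b - a) * norm (f' x)"
    using \<open>a < b\<close> by simp
  also have "\<dots> \<le> (b - a) * B"
    using \<open>a < b\<close> bound[OF x] by (intro mult_left_mono) auto
  finally show ?thesis by (simp add: mult.commute)
qed simp

lemma norm_radial_velocity_le:
  fixes v h :: "real \<Rightarrow> 'a::real_inner"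
  assumes "1 \<le> n" and "0 \<le> s" and v: "continuous_on {0..s} v" and "v 0 = 0"
    and der: "\<And>t. 0 < t \<Longrightarrow> t < s \<Longrightarrow> (v has_vector_derivative - ((real n - 1) / t) *\<^sub>R v t + h t) (at t)"
    and bound: "\<And>t. 0 < t \<Longrightarrow> t < s \<Longrightarrow> norm (h t) \<le> K"
  shows "norm (v s) \<le> K * s"
proof (cases "s = 0")
  case False
  with \<open>0 \<le> s\<close> have "0 < s" by simp
  obtain k where n: "n = Suc k" using \<open>1 \<le> n\<close> by (cases n) auto
  \<comment> \<open>\<open>t\<^sup>n\<^sup>-\<^sup>1 v t\<close> has derivative \<open>t\<^sup>n\<^sup>-\<^sup>1 h t\<close>\<close>
  define W where "W t = t ^ (n - 1) *\<^sub>R v t" for t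
  have W_der: "(W has_vector_derivative t ^ (n - 1) *\<^sub>R h t) (at t)" if "0 < t" "t < s" for t
  proof -
    have power: "real (n - 1) * t ^ (n - 1 - 1) = t ^ (n - 1) * ((real n - 1) / t)"
      using \<open>0 < t\<close> unfolding n by (cases k) (auto simp: field_simps)
    have "(W has_vector_derivative t ^ (n - 1) *\<^sub>R (- ((real n - 1) / t) *\<^sub>R v t + h t)
        + (real (n - 1) * t ^ (n - 1 - 1)) *\<^sub>R v t) (at t)"
      unfolding W_def
      by (rule has_vector_derivative_scaleR[OF _ der[OF that]]) (auto intro!: derivative_eq_intros)
    then show ?thesis
      unfolding power by (simp add: algebra_simps)
  qed
  have W_bound: "norm (t ^ (n - 1) *\<^sub>R h t) \<le> s ^ (n - 1) * K" if "0 < t" "t < s" for t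
  proof -
    have "norm (t ^ (n - 1) *\<^sub>R h t) = t ^ (n - 1) * norm (h t)"
      using that by simp
    also have "\<dots> \<le> s ^ (n - 1) * K"
      using that bound[OF that] by (intro mult_mono power_mono) auto
    finally show ?thesis .
  qed
  have "continuous_on {0..s} W"
    unfolding W_def by (intro continuous_intros v)
  then have "norm (W s - W 0) \<le> s ^ (n - 1) * K * (s - 0)"
    using \<open>0 < s\<close> W_der W_bound by (intro norm_diff_le_of_vector_derivative_bound) auto
  then have "s ^ (n - 1) * norm (v s) \<le> s ^ (n - 1) * (K * s)"
    using \<open>0 < s\<close> \<open>v 0 = 0\<close> by (simp add: W_def algebra_simps)
  then show ?thesis
    using \<open>0 < s\<close> by simp
qed (use \<open>v 0 = 0\<close> in simp)

lemma radial_solution_bounds_near_zero: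
  fixes u v G :: "real \<Rightarrow> 'a::real_inner"
  assumes "1 \<le> n" and "0 \<le> L"
    and u: "continuous_on {0..\<tau>} u" and v: "continuous_on {0..\<tau>} v" and "v 0 = 0"
    and u_der: "\<And>t. 0 < t \<Longrightarrow> (u has_vector_derivative v t) (at t)"
    and v_der: "\<And>t. 0 < t \<Longrightarrow> (v has_vector_derivative - ((real n - 1) / t) *\<^sub>R v t + G t) (at t)"
    and G: "\<And>t. 0 < t \<Longrightarrow> t \<le> \<tau> \<Longrightarrow> norm (G t) \<le> L * norm (u t)"
    and M: "\<And>t. t \<in> {0..\<tau>} \<Longrightarrow> norm (u t) \<le> M"
    and r: "r \<in> {0..\<tau>}"
  shows "norm (v r) \<le> L * M * r" and "norm (u r - u 0) \<le> L * M * \<tau> * r"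
proof -
  have "0 \<le> M" using M[of 0] r by (auto intro: order_trans[OF norm_ge_zero])
  have v_bound: "norm (v s) \<le> L * M * s" if s: "s \<in> {0..\<tau>}" for s
  proof (rule norm_radial_velocity_le[where v = v and h = G and s = s, OF \<open>1 \<le> n\<close> _ _ \<open>v 0 = 0\<close>])
    show "continuous_on {0..s} v"
      by (rule continuous_on_subset[OF v]) (use s in auto)
    show "(v has_vector_derivative - ((real n - 1) / t) *\<^sub>R v t + G t) (at t)" if "0 < t" for t
      using v_der[OF that] .
    show "norm (G t) \<le> L * M" if "0 < t" "t < s" for t
    proof -
      have "norm (G t) \<le> L * norm (u t)" using G that s by simp
      also have "\<dots> \<le> L * M"
        using M[of t] that s \<open>0 \<le> L\<close> by (intro mult_left_mono) auto
      finally show ?thesis .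
    qed
  qed (use s in auto)
  then show "norm (v r) \<le> L * M * r" using r .
  have "norm (u r - u 0) \<le> L * M * \<tau> * (r - 0)"
  proof (rule norm_diff_le_of_vector_derivative_bound[where f = u and f' = v and a = 0 and b = r])
    show "continuous_on {0..r} u"
      by (rule continuous_on_subset[OF u]) (use r in auto)
    show "(u has_vector_derivative v t) (at t)" if "0 < t" for t
      using u_der[OF that] .
    show "norm (v t) \<le> L * M * \<tau>" if "0 < t" "t < r" for t
    proof -
      have "norm (v t) \<le> L * M * t" using v_bound[of t] that r by simp
      also have "\<dots> \<le> L * M * \<tau>"
        using that r \<open>0 \<le> L\<close> \<open>0 \<le> M\<close> by (intro mult_left_mono) auto
      finally show ?thesis .
    qed
  qed (use r in auto)
  then show "norm (u r - u 0) \<le> L * M * \<tau> * r" by simp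
qed

lemma radial_solution_vanishes_near_zero:
  fixes u v G :: "real \<Rightarrow> 'a::real_inner"
  assumes "1 \<le> n" and "0 \<le> L" and "L * \<tau>\<^sup>2 < 1"
    and u: "continuous_on {0..\<tau>} u" and v: "continuous_on {0..\<tau>} v" and "u 0 = 0" and "v 0 = 0"
    and u_der: "\<And>t. 0 < t \<Longrightarrow> (u has_vector_derivative v t) (at t)"
    and v_der: "\<And>t. 0 < t \<Longrightarrow> (v has_vector_derivative - ((real n - 1) / t) *\<^sub>R v t + G t) (at t)"
    and G: "\<And>t. 0 < t \<Longrightarrow> t \<le> \<tau> \<Longrightarrow> norm (G t) \<le> L * norm (u t)"
    and r: "r \<in> {0..\<tau>}"
  shows "u r = 0 \<and> v r = 0"
proof -
  obtain r0 where r0: "r0 \<in> {0..\<tau>}" and r0_max: "\<And>r. r \<in> {0..\<tau>} \<Longrightarrow> norm (u r) \<le> norm (u r0)"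
    using continuous_attains_sup[of "{0..\<tau>}" "\<lambda>r. norm (u r)"] continuous_on_norm[OF u] r by auto
  define M where "M = norm (u r0)"
  have bounds: "norm (v s) \<le> L * M * s" "norm (u s - u 0) \<le> L * M * \<tau> * s" if "s \<in> {0..\<tau>}" for s
    using radial_solution_bounds_near_zero[OF assms(1,2) u v \<open>v 0 = 0\<close> u_der v_der G
        r0_max[folded M_def] that] by auto
  have "0 \<le> M" by (simp add: M_def)
  have "M \<le> L * M * \<tau> * r0"
    using bounds(2)[OF r0] \<open>u 0 = 0\<close> by (simp add: M_def)
  also have "\<dots> \<le> L * M * \<tau> * \<tau>"
    using r0 \<open>0 \<le> L\<close> \<open>0 \<le> M\<close> by (intro mult_left_mono) auto
  also have "\<dots> = (L * \<tau>\<^sup>2) * M"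
    by (simp add: power2_eq_square)
  finally have "(1 - L * \<tau>\<^sup>2) * M \<le> 0"
    by (simp add: algebra_simps)
  with \<open>L * \<tau>\<^sup>2 < 1\<close> \<open>0 \<le> M\<close> have "M = 0"
    by (simp add: mult_le_0_iff)
  then show ?thesis
    using r0_max[OF r] bounds(1)[OF r] by (simp add: M_def)
qed

lemma centered_sol_agree_near_zero:
  fixes V :: "'a::euclidean_space \<Rightarrow> real"
  assumes "1 \<le> n" and lip: "L-lipschitz_on UNIV (grad V)"
    and y: "centered_sol n V u0 y" and z: "centered_sol n V u0 z"
  obtains \<tau> where "0 < \<tau>" and "\<And>r. r \<in> {0..\<tau>} \<Longrightarrow> y r = z r"
proof -
  have "0 \<le> L" using lipschitz_on_nonneg[OF lip] .
  define \<tau> where "\<tau> = 1 / (L + 1)"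
  have "0 < \<tau>" "\<tau> \<le> 1" "L * \<tau> < 1" using \<open>0 \<le> L\<close> by (simp_all add: \<tau>_def)
  then have "L * \<tau>\<^sup>2 < 1"
    using mult_left_mono[OF \<open>\<tau> \<le> 1\<close>, of "L * \<tau>"] \<open>0 \<le> L\<close> by (simp add: power2_eq_square mult_ac)
  define d where "d t = y t - z t" for t
  have "(d has_vector_derivative (snd (d t), - ((real n - 1) / t) *\<^sub>R snd (d t)
      + (grad V (fst (y t)) - grad V (fst (z t))))) (at t)" if "0 < t" for t
  proof -
    have "(d has_vector_derivative radial_field n (grad V) t (y t) - radial_field n (grad V) t (z t)) (at t)"
      unfolding d_def[abs_def] using y z that
      by (intro has_vector_derivative_diff) (simp_all add: centered_sol_iff)
    then show ?thesis by (simp add: radial_field_diff d_def)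
  qed
  then have u_der: "((\<lambda>t. fst (d t)) has_vector_derivative snd (d t)) (at t)"
    and v_der: "((\<lambda>t. snd (d t)) has_vector_derivative - ((real n - 1) / t) *\<^sub>R snd (d t)
      + (grad V (fst (y t)) - grad V (fst (z t)))) (at t)" if "0 < t" for t
    using that by (simp_all add: has_vector_derivative_prod_iff)
  have "continuous_on {0..\<tau>} y" "continuous_on {0..\<tau>} z"
    by (rule continuous_on_subset[OF centered_sol_continuous[OF y]]
        continuous_on_subset[OF centered_sol_continuous[OF z]], auto)+
  then have u_cont: "continuous_on {0..\<tau>} (\<lambda>t. fst (d t))"
    and v_cont: "continuous_on {0..\<tau>} (\<lambda>t. snd (d t))"
    unfolding d_def by (auto intro!: continuous_intros)
  have "fst (d 0) = 0" "snd (d 0) = 0"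
    using y z by (simp_all add: centered_sol_def d_def)
  moreover have G: "norm (grad V (fst (y t)) - grad V (fst (z t))) \<le> L * norm (fst (d t))"
    if "0 < t" "t \<le> \<tau>" for t
    unfolding d_def using lipschitz_on_normD[OF lip] by simp
  ultimately have "fst (d r) = 0 \<and> snd (d r) = 0" if "r \<in> {0..\<tau>}" for r
    using radial_solution_vanishes_near_zero[where u = "\<lambda>t. fst (d t)" and v = "\<lambda>t. snd (d t)",
        OF \<open>1 \<le> n\<close> \<open>0 \<le> L\<close> \<open>L * \<tau>\<^sup>2 < 1\<close> u_cont v_cont _ _ u_der v_der G that]
    by blast
  then have "y r = z r" if "r \<in> {0..\<tau>}" for r
    using that by (simp add: d_def prod_eq_iff)
  with \<open>0 < \<tau>\<close> show ?thesis by (rule that)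
qed

lemma centered_sol_unique:
  fixes V :: "'a::euclidean_space \<Rightarrow> real"
  assumes "1 \<le> n" and lip: "L-lipschitz_on UNIV (grad V)"
    and y: "centered_sol n V u0 y" and z: "centered_sol n V u0 z"
  shows "y = z"
proof
  obtain \<tau> where "0 < \<tau>" and near_zero: "\<And>r. r \<in> {0..\<tau>} \<Longrightarrow> y r = z r"
    using centered_sol_agree_near_zero[OF assms] by blast
  fix r
  consider "r \<le> 0" | "r \<in> {0..\<tau>}" | "\<tau> \<le> r" by fastforce
  then show "y r = z r"
  proof cases
    case 1
    then show ?thesis using y z by (simp add: centered_sol_iff)
  next
    case 2
    then show ?thesis by (rule near_zero)
  next
    case 3
    show ?thesis
    proof (rule radial_ode_unique_forward[where n = n, OF lip \<open>0 < \<tau>\<close> 3])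
      show "continuous_on {\<tau>..r} y" "continuous_on {\<tau>..r} z"
        by (rule continuous_on_subset[OF centered_sol_continuous[OF y]]
            continuous_on_subset[OF centered_sol_continuous[OF z]], use \<open>0 < \<tau>\<close> in auto)+
      show "y \<tau> = z \<tau>" using near_zero \<open>0 < \<tau>\<close> by simp
    qed (use y z \<open>0 < \<tau>\<close> in \<open>auto simp: centered_sol_iff\<close>)
  qed
qed

lemma centered_sol_S0:
  fixes V :: "'a::euclidean_space \<Rightarrow> real"
  assumes "V \<in> Vquad k R" and "1 \<le> k" and "1 \<le> n"
  shows "centered_sol n V u0 (S0 n V u0)"
proof -
  obtain L where lip: "L-lipschitz_on UNIV (grad V)"
    using Vquad_lipschitz_grad[OF assms(1,2)] .
  obtain y where "centered_sol n V u0 y"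
    using centered_sol_exists[OF \<open>1 \<le> n\<close> lip] .
  then have "\<exists>!y. centered_sol n V u0 y"
    using centered_sol_unique[OF \<open>1 \<le> n\<close> lip] by blast
  then show ?thesis
    unfolding S0_def[abs_def] by (rule theI')
qed

section \<open>Convergence along the stable manifold\<close>

lemma riccati_inverse_unique:
  fixes c :: "real \<Rightarrow> real"
  assumes "0 < a" and "a \<le> b" and c: "continuous_on {a..b} c"
    and der: "\<And>t. a < t \<Longrightarrow> t < b \<Longrightarrow> (c has_real_derivative - (c t)\<^sup>2) (at t)"
    and bound: "\<And>t. t \<in> {a..b} \<Longrightarrow> \<bar>c t\<bar> \<le> C"
    and "c a = 1 / a"
  shows "c b = 1 / b"
proof -
  \<comment> \<open>\<open>q t = t c t - 1\<close> solves the linear equation \<open>q' = - c q\<close>\<close>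
  define q where "q t = t * c t - 1" for t
  have "q b = 0"
  proof (rule gronwall_zero[where f = q and f' = "\<lambda>t. - c t * q t" and K = C and a = a])
    show "continuous_on {a..b} q"
      unfolding q_def by (intro continuous_intros c)
    show "(q has_vector_derivative - c t * q t) (at t)" if "a < t" "t < b" for t
    proof -
      have "(q has_real_derivative 1 * c t + (- (c t)\<^sup>2) * t - 0) (at t)"
        unfolding q_def[abs_def] by (intro DERIV_diff DERIV_mult DERIV_ident DERIV_const der that)
      then show ?thesis
        by (simp add: has_real_derivative_iff_has_vector_derivative[symmetric] q_def
            power2_eq_square algebra_simps)
    qed
    show "norm (- c t * q t) \<le> C * norm (q t)" if "a < t" "t < b" for t
      using bound[of t] that by (simp add: abs_mult mult_right_mono)
    show "q a = 0"
      using \<open>c a = 1 / a\<close> \<open>0 < a\<close> by (simp add: q_def)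
  qed fact
  then show ?thesis
    using \<open>0 < a\<close> \<open>a \<le> b\<close> by (simp add: q_def field_simps)
qed

lemma has_vector_derivative_auto_field:
  fixes z :: "real \<Rightarrow> 'a::euclidean_space \<times> 'a \<times> real"
  assumes "(z has_vector_derivative auto_field n V (z r)) (at r)"
  shows "((\<lambda>s. (fst (z s), fst (snd (z s)))) has_vector_derivative
           (fst (snd (z r)), - ((real n - 1) * snd (snd (z r))) *\<^sub>R fst (snd (z r)) + grad V (fst (z r))))
           (at r)"
    and "((\<lambda>s. snd (snd (z s))) has_real_derivative - (snd (snd (z r)))\<^sup>2) (at r)"
proof -
  have "auto_field n V (z r) = (fst (snd (z r)),
      - ((real n - 1) * snd (snd (z r))) *\<^sub>R fst (snd (z r)) + grad V (fst (z r)), - (snd (snd (z r)))\<^sup>2)"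
    by (simp add: auto_field_def split: prod.splits)
  with assms have "((\<lambda>s. fst (z s)) has_vector_derivative fst (snd (z r))) (at r)"
    "((\<lambda>s. fst (snd (z s))) has_vector_derivative
       - ((real n - 1) * snd (snd (z r))) *\<^sub>R fst (snd (z r)) + grad V (fst (z r))) (at r)"
    "((\<lambda>s. snd (snd (z s))) has_vector_derivative - (snd (snd (z r)))\<^sup>2) (at r)"
    by (simp_all add: has_vector_derivative_prod_iff)
  then show "((\<lambda>s. (fst (z s), fst (snd (z s)))) has_vector_derivative
           (fst (snd (z r)), - ((real n - 1) * snd (snd (z r))) *\<^sub>R fst (snd (z r)) + grad V (fst (z r))))
           (at r)"
    and "((\<lambda>s. snd (snd (z s))) has_real_derivative - (snd (snd (z r)))\<^sup>2) (at r)"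
    by (simp_all add: has_vector_derivative_Pair has_real_derivative_iff_has_vector_derivative)
qed

lemma stable_data_radial_solution:
  fixes V :: "'a::euclidean_space \<Rightarrow> real"
  assumes "0 < N" and stable: "stable_data n V u1 \<epsilon>1 c1 p uN wN (1 / N)"
  obtains w where "w N = (uN, wN)" and "continuous_on {N..} w"
    and "\<And>r. N < r \<Longrightarrow> (w has_vector_derivative radial_field n (grad V) r (w r)) (at r)"
    and "((\<lambda>r. fst (w r)) \<longlongrightarrow> p) at_top"
proof -
  obtain z :: "real \<Rightarrow> 'a \<times> 'a \<times> real" where zN: "z N = (uN, wN, 1 / N)"
    and z_der: "\<And>r. N \<le> r \<Longrightarrow> (z has_vector_derivative auto_field n V (z r)) (at r within {N..})"
    and z_in: "\<And>r. N \<le> r \<Longrightarrow> z r \<in> cball u1 \<epsilon>1 \<times> UNIV \<times> {0..c1}"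
    and z_lim: "(z \<longlongrightarrow> (p, 0, 0)) at_top"
    using stable \<open>0 < N\<close> unfolding stable_data_def by auto
  define w where "w r = (fst (z r), fst (snd (z r)))" for r
  define c where "c r = snd (snd (z r))" for r
  have z_cont: "continuous_on {N..} z"
    using z_der by (auto simp: continuous_on_eq_continuous_within intro: has_vector_derivative_continuous)
  have z_der_at: "(z has_vector_derivative auto_field n V (z r)) (at r)" if "N < r" for r
  proof -
    have "at r within {N..} = at r"
      by (rule at_within_interior) (use that in auto)
    then show ?thesis using z_der[of r] that by simp
  qed
  have w_der: "(w has_vector_derivative
        (snd (w r), - ((real n - 1) * c r) *\<^sub>R snd (w r) + grad V (fst (w r)))) (at r)"
    and c_der: "(c has_real_derivative - (c r)\<^sup>2) (at r)" if "N < r" for r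
    using has_vector_derivative_auto_field[OF z_der_at[OF that]]
    unfolding w_def[abs_def] c_def[abs_def] by simp_all
  have "c r = 1 / r" if "N \<le> r" for r
  proof (rule riccati_inverse_unique[OF \<open>0 < N\<close> that _ c_der])
    show "continuous_on {N..r} c"
      unfolding c_def by (intro continuous_intros continuous_on_subset[OF z_cont]) auto
    show "\<bar>c t\<bar> \<le> c1" if "t \<in> {N..r}" for t
      using z_in[of t] that by (auto simp: c_def)
    show "c N = 1 / N" using zN by (simp add: c_def)
  qed
  then have "(w has_vector_derivative radial_field n (grad V) r (w r)) (at r)" if "N < r" for r
    using w_der[OF that] that by (simp add: radial_field_def)
  moreover have "continuous_on {N..} w"
    unfolding w_def by (intro continuous_intros z_cont)
  moreover have "((\<lambda>r. fst (w r)) \<longlongrightarrow> p) at_top"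
    using tendsto_fst[OF z_lim] by (simp add: w_def)
  moreover have "w N = (uN, wN)" using zN by (simp add: w_def)
  ultimately show ?thesis using that by blast
qed

lemma stable_data_tendsto:
  fixes V :: "'a::euclidean_space \<Rightarrow> real"
  assumes lip: "L-lipschitz_on UNIV (grad V)" and y: "centered_sol n V u0 y" and "0 < N"
    and yN: "y N = (uN, wN)" and stable: "stable_data n V u1 \<epsilon>1 c1 p uN wN (1 / N)"
  shows "((\<lambda>r. fst (y r)) \<longlongrightarrow> p) at_top"
proof -
  obtain w where wN: "w N = (uN, wN)" and w_cont: "continuous_on {N..} w"
    and w_der: "\<And>r. N < r \<Longrightarrow> (w has_vector_derivative radial_field n (grad V) r (w r)) (at r)"
    and w_lim: "((\<lambda>r. fst (w r)) \<longlongrightarrow> p) at_top"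
    using stable_data_radial_solution[OF \<open>0 < N\<close> stable] by blast
  have "y r = w r" if "N \<le> r" for r
  proof (rule radial_ode_unique_forward[OF lip \<open>0 < N\<close> that])
    show "continuous_on {N..r} y"
      by (rule continuous_on_subset[OF centered_sol_continuous[OF y]]) (use \<open>0 < N\<close> in auto)
    show "continuous_on {N..r} w"
      by (rule continuous_on_subset[OF w_cont]) auto
    show "(y has_vector_derivative radial_field n (grad V) t (y t)) (at t)" if "N < t" for t
      using y that \<open>0 < N\<close> by (simp add: centered_sol_iff)
    show "y N = w N" using yN wN by simp
  qed (rule w_der)
  then have "\<forall>\<^sub>F r in at_top. fst (w r) = fst (y r)"
    unfolding eventually_at_top_linorder by (intro exI[of _ N]) simp
  with w_lim show ?thesis
    by (simp add: Lim_transform_eventually)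
qed
lemma centered_sol_in_radial_set:
  assumes y: "centered_sol n V u0 y" and lim: "((\<lambda>r. fst (y r)) \<longlongrightarrow> p) at_top"
  shows "(\<lambda>r. fst (y r)) \<in> radial_set n V p"
proof -
  have "continuous_on {0..} (\<lambda>r. fst (y r))"
    using centered_sol_continuous[OF y] by (intro continuous_intros)
  moreover have "((\<lambda>r. snd (y r)) \<longlongrightarrow> 0) (at_right 0)"
    using tendsto_snd[of y "(u0, 0)"] y by (simp add: centered_sol_def)
  moreover have "\<forall>r>0. ((\<lambda>r. fst (y r)) has_vector_derivative snd (y r)) (at r) \<and>
      ((\<lambda>r. snd (y r)) has_vector_derivative
        - ((real n - 1) / r) *\<^sub>R snd (y r) + grad V (fst (y r))) (at r)"
    using y by (simp add: centered_sol_def)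
  ultimately show ?thesis
    unfolding radial_set_def mem_Collect_eq using lim by (intro exI[of _ "\<lambda>r. snd (y r)"] conjI)
qed

lemma S0_zero:
  fixes V :: "'a::euclidean_space \<Rightarrow> real"
  assumes "V \<in> Vquad k R" and "1 \<le> k" and "1 \<le> n"
  shows "S0 n V u0 0 = (u0, 0)"
  using centered_sol_S0[OF assms] by (simp add: centered_sol_def)

lemma S0_in_radial_set:
  fixes V :: "'a::euclidean_space \<Rightarrow> real"
  assumes V: "V \<in> Vquad k R" and "1 \<le> k" and "1 \<le> n" and "0 < N"
    and "S0 n V u0 N = (uN, wN)" and "stable_data n V u1 \<epsilon>1 c1 p uN wN (1 / N)"
  shows "(\<lambda>r. fst (S0 n V u0 r)) \<in> radial_set n V p"
proof -
  obtain L where "L-lipschitz_on UNIV (grad V)"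
    using Vquad_lipschitz_grad[OF V \<open>1 \<le> k\<close>] .
  with centered_sol_S0[OF assms(1-3)] show ?thesis
    using assms(4-6) by (intro centered_sol_in_radial_set stable_data_tendsto)
qed

theorem proposition4p3:
  fixes n k N :: nat and R \<epsilon>1 c1 :: real
    and V1 :: "'a::euclidean_space \<Rightarrow> real" and u1inf :: 'a
    and \<Lambda> :: "('a \<Rightarrow> real) set"
    and uinf :: "('a \<Rightarrow> real) \<Rightarrow> 'a"
    and w :: "('a \<Rightarrow> real) \<Rightarrow> 'a \<Rightarrow> real \<Rightarrow> 'a"
  assumes n2: "n \<ge> 2" and k1: "k \<ge> 1" and Rpos: "R > 0"
    and nbhd: "is_nbhd_Vquad k R \<Lambda> V1"
    and V1min: "nondeg_min_point V1 u1inf"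
    and eps1: "\<epsilon>1 > 0" and c1: "c1 > 0"
    and uinf_V1: "uinf V1 = u1inf"
    and uinf_min: "\<forall>V\<in>\<Lambda>. local_min_point V (uinf V)"
    and w_cont: "\<forall>V\<in>\<Lambda>. continuous_on (cball u1inf \<epsilon>1 \<times> {0..c1}) (\<lambda>(u, c). w V u c)"
    and w_Ck: "\<forall>V\<in>\<Lambda>. Ck_on k (ball u1inf \<epsilon>1 \<times> {0<..<c1}) (\<lambda>(u, c). w V u c)"
    and w_char: "\<forall>V\<in>\<Lambda>. \<forall>u0\<in>cball u1inf \<epsilon>1. \<forall>v0. \<forall>c0\<in>{0<..c1}.
                    (v0 = w V u0 c0 \<longleftrightarrow> stable_data n V u1inf \<epsilon>1 c1 (uinf V) u0 v0 c0)"
    and N: "real N \<ge> 1 / c1"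
  defines "PhiInvW \<equiv> {(u0, uN, V). uN \<in> ball u1inf \<epsilon>1 \<and> V \<in> \<Lambda> \<and>
                          S0 n V u0 (real N) = (uN, w V uN (1 / real N))}"
    and "SLam \<equiv> {(V, u). V \<in> \<Lambda> \<and> u \<in> radial_set n V (uinf V) \<and> u (real N) \<in> ball u1inf \<epsilon>1}"
    and "F \<equiv> (\<lambda>(u0, uN, V). (V, \<lambda>r. fst (S0 n V u0 r)))"
  shows "F ` PhiInvW \<subseteq> SLam \<and> inj_on F PhiInvW"
proof -
  have "0 < real N" using N c1 by (smt (verit) divide_pos_pos)
  moreover have "1 / real N \<le> c1" using N c1 by (simp add: divide_le_eq mult.commute)
  ultimately have c_N: "1 / real N \<in> {0<..c1}" by simp
  have LV: "\<Lambda> \<subseteq> Vquad k R" using nbhd by (simp add: is_nbhd_Vquad_def)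
  have "F (u0, uN, V) \<in> SLam" if "(u0, uN, V) \<in> PhiInvW" for u0 uN V
  proof -
    have "V \<in> \<Lambda>" and uN: "uN \<in> ball u1inf \<epsilon>1"
      and SN: "S0 n V u0 (real N) = (uN, w V uN (1 / real N))"
      using that by (auto simp: PhiInvW_def)
    moreover have "stable_data n V u1inf \<epsilon>1 c1 (uinf V) uN (w V uN (1 / real N)) (1 / real N)"
      using w_char \<open>V \<in> \<Lambda>\<close> c_N mem_ball_imp_mem_cball[OF uN] by blast
    ultimately show ?thesis
      using S0_in_radial_set[of V k R n, OF _ k1 _ \<open>0 < real N\<close> SN] LV n2
      by (auto simp: F_def SLam_def)
  qed
  moreover have "inj_on F PhiInvW"
  proof (rule inj_onI)
    fix x x' assume "x \<in> PhiInvW" "x' \<in> PhiInvW" "F x = F x'"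
    moreover obtain u0 uN V u0' uN' V' where x: "x = (u0, uN, V)" "x' = (u0', uN', V')"
      by (cases x, cases x')
    ultimately have "V \<in> \<Lambda>" and "V' = V"
      and "(\<lambda>r. fst (S0 n V u0 r)) = (\<lambda>r. fst (S0 n V u0' r))"
      and "fst (S0 n V u0 (real N)) = uN" "fst (S0 n V u0' (real N)) = uN'"
      by (auto simp: PhiInvW_def F_def)
    moreover have "V \<in> Vquad k R" using LV \<open>V \<in> \<Lambda>\<close> by blast
    then have "fst (S0 n V u0 0) = u0" "fst (S0 n V u0' 0) = u0'"
      using n2 by (simp_all add: S0_zero[OF _ k1])
    ultimately show "x = x'"
      unfolding x by (metis (mono_tags))
  qed
  ultimately show ?thesis by auto
qed

end
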